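(* Let $S$ be a memory system satisfying the Causality and Data Independence assumptions. For all $n,m\ge1$: every trace of $S(n,m)$ is sequentially consistent if and only if there is a witness $\Omega$ for $S(n,m)$ such that the graph $G(\Omega)(\tau)$ is acyclic for every unambiguous trace $\tau$ of $S(n,m)$.
   Context: Notation: $\mathbb{N}_n=\{1,\dots,n\}$, $\mathbb{W}_n=\{0,\dots,n\}$, $\mathbb{W}=\{0,1,2,\dots\}$. Memory events $E(n,m,v)=\{R,W\}\times\mathbb{N}_n\times\mathbb{N}_m\times\mathbb{W}_v$; for $e=\langle a,b,c,d\rangle$, $op(e)=a$, $proc(e)=b$, $loc(e)=c$, $data(e)=d$; $0$ models the initial value of every location. A memory system is a family $S=(S(n,m,v))_{n,m,v\ge1}$, $S(n,m,v)$ a regular set of finite runs over an alphabet $E^a(n,m,v)\supseteq E(n,m,v)$ (other letters are internal events); $S(n,m)=\bigcup_{v\ge1}S(n,m,v)$. The trace of a run is its subsequence of memory events; traces of $S(n,m,v)$ (resp. $S(n,m)$) are traces of its runs. For a sequence $\tau$ of memory events with positions $1,\dots,|\tau|$: $P(\tau,i)=\{k: proc(\tau(k))=i\}$, $L(\tau,j)=\{k: loc(\tau(k))=j\}$, $L^w(\tau,j)=\{k\in L(\tau,j): op(\tau(k))=W\}$, $L^r(\tau,j)=\{k\in L(\tau,j): op(\tau(k))=R\}$. A trace $\tau$ is unambiguous if for every location $j$ and $x\in L^w(\tau,j)$, $data(\tau(x))\ne0$ and $data(\tau(x))\ne data(\tau(y))$ for all $y\in L^w(\tau,j)\setminus\{x\}$.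 Causality assumption: for all $n,m,v\ge1$, every trace $\tau$ of $S(n,m,v)$, every location $j$ and every $x\in L^r(\tau,j)$, either $data(\tau(x))=0$ or there is $y\in L^w(\tau,j)$ with $data(\tau(x))=data(\tau(y))$. Data Independence assumption: a renaming function is $\lambda:\mathbb{N}_m\times\mathbb{W}\to\mathbb{W}$ with $\lambda(j,0)=0$ for all $j$, inducing $\lambda^d(\langle a,b,c,d\rangle)=\langle a,b,c,\lambda(c,d)\rangle$ letterwise on sequences; for all $n,m,v\ge1$ and $\tau\in E(n,m,v)^*$, $\tau$ is a trace of $S(n,m,v)$ iff there are an unambiguous trace $\tau'$ of $S(n,m)$ and a renaming function $\lambda:\mathbb{N}_m\times\mathbb{W}\to\mathbb{W}_v$ with $\tau=\lambda^d(\tau')$. Sequential consistency: $\tau$ is serial if for every position $u$, with $upto(\tau,u)=\{k\le u: op(\tau(k))=W,\ loc(\tau(k))=loc(\tau(u))\}$, $data(\tau(u))=0$ when $upto(\tau,u)=\emptyset$ and $data(\tau(u))=data(\tau(\max upto(\tau,u)))$ otherwise. $M(\tau,i)=\{\langle u,v\rangle: u,v\in P(\tau,i), u<v\}$. $\tau$ is sequentially consistent if some permutation $f$ of $\mathbb{N}_{|\tau|}$ satisfies (C1) $\langle u,v\rangle\in M(\tau,i)$ for some $i$ implies $f(u)<f(v)$, and (C2) $\tau_{f^{-1}(1)}\cdots\tau_{f^{-1}(|\tau|)}$ is serial. A witness $\Omega$ for $S(n,m)$ assigns to every trace $\tau$ of $S(n,m)$ and location $j$ a strict total order $\Omega(\tau,j)$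 on $L^w(\tau,j)$. For unambiguous $\tau$, $\Omega^e(\tau,j)\subseteq L(\tau,j)^2$: $\langle x,y\rangle\in\Omega^e(\tau,j)$ iff (1) $data(\tau(x))=data(\tau(y))$, $op(\tau(x))=W$, $op(\tau(y))=R$; or (2) $data(\tau(x))=0$ and $data(\tau(y))\ne0$; or (3) there are $a,b\in L^w(\tau,j)$ with $\langle a,b\rangle\in\Omega(\tau,j)$, $data(\tau(a))=data(\tau(x))$, $data(\tau(b))=data(\tau(y))$. The constraint graph $G(\Omega)(\tau)$ is the directed graph with vertex set $\{1,\dots,|\tau|\}$ and edge set $\bigcup_{1\le i\le n}M(\tau,i)\cup\bigcup_{1\le j\le m}\Omega^e(\tau,j)$. *)

theory Defs
  imports Main
begin

datatype opk = R | W

type_synonym event = "opk \<times> nat \<times> nat \<times> nat"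

definition op :: "event \<Rightarrow> opk" where "op e = fst e"
definition proc :: "event \<Rightarrow> nat" where "proc e = fst (snd e)"
definition loc :: "event \<Rightarrow> nat" where "loc e = fst (snd (snd e))"
definition data :: "event \<Rightarrow> nat" where "data e = snd (snd (snd e))"

definition E :: "nat \<Rightarrow> nat \<Rightarrow> nat \<Rightarrow> event set" where
  "E n m v = {e. proc e \<in> {1..n} \<and> loc e \<in> {1..m} \<and> data e \<le> v}"

datatype 'i letter = Mem event | Internal 'i

fun is_mem :: "'i letter \<Rightarrow> bool" where
  "is_mem (Mem e) = True" | "is_mem (Internal _) = False"

fun the_mem :: "'i letter \<Rightarrow> event" where
  "the_mem (Mem e) = e" | "the_mem (Internal _) = undefined"

definition trace_of :: "'i letter list \<Rightarrow> event list" where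
  "trace_of r = map the_mem (filter is_mem r)"

definition regular_on :: "'a set \<Rightarrow> 'a list set \<Rightarrow> bool" where
  "regular_on A L \<longleftrightarrow>
     (\<exists>(Q :: nat set) q0 \<delta> F. finite Q \<and> q0 \<in> Q \<and> (\<forall>q\<in>Q. \<forall>a\<in>A. \<delta> q a \<in> Q) \<and> F \<subseteq> Q \<and>
        L = {w. set w \<subseteq> A \<and> foldl \<delta> q0 w \<in> F})"

definition memory_system ::
  "(nat \<Rightarrow> nat \<Rightarrow> nat \<Rightarrow> 'i letter set) \<Rightarrow> (nat \<Rightarrow> nat \<Rightarrow> nat \<Rightarrow> 'i letter list set) \<Rightarrow> bool" where
  "memory_system Ea S \<longleftrightarrow>
     (\<forall>n m v. n \<ge> 1 \<and> m \<ge> 1 \<and> v \<ge> 1 \<longrightarrow>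
        finite (Ea n m v) \<and> (\<forall>e. Mem e \<in> Ea n m v \<longleftrightarrow> e \<in> E n m v) \<and>
        regular_on (Ea n m v) (S n m v))"

definition traces :: "(nat \<Rightarrow> nat \<Rightarrow> nat \<Rightarrow> 'i letter list set) \<Rightarrow> nat \<Rightarrow> nat \<Rightarrow> nat \<Rightarrow> event list set" where
  "traces S n m v = trace_of ` S n m v"

definition traces_nm :: "(nat \<Rightarrow> nat \<Rightarrow> nat \<Rightarrow> 'i letter list set) \<Rightarrow> nat \<Rightarrow> nat \<Rightarrow> event list set" where
  "traces_nm S n m = (\<Union>v\<in>{v. v \<ge> 1}. traces S n m v)"

section \<open>Positions in sequences (1-based, as in the paper)\<close>

definition ev :: "event list \<Rightarrow> nat \<Rightarrow> event" where
  "ev \<tau> k = \<tau> ! (k - 1)"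

definition pos :: "event list \<Rightarrow> nat set" where
  "pos \<tau> = {1..length \<tau>}"

definition Pset :: "event list \<Rightarrow> nat \<Rightarrow> nat set" where
  "Pset \<tau> i = {k \<in> pos \<tau>. proc (ev \<tau> k) = i}"

definition Lset :: "event list \<Rightarrow> nat \<Rightarrow> nat set" where
  "Lset \<tau> j = {k \<in> pos \<tau>. loc (ev \<tau> k) = j}"

definition Lw :: "event list \<Rightarrow> nat \<Rightarrow> nat set" where
  "Lw \<tau> j = {k \<in> Lset \<tau> j. op (ev \<tau> k) = W}"

definition Lr :: "event list \<Rightarrow> nat \<Rightarrow> nat set" where
  "Lr \<tau> j = {k \<in> Lset \<tau> j. op (ev \<tau> k) = R}"

definition unambiguous :: "event list \<Rightarrow> bool" where
  "unambiguous \<tau> \<longleftrightarrow>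
     (\<forall>j. \<forall>x\<in>Lw \<tau> j. data (ev \<tau> x) \<noteq> 0 \<and>
        (\<forall>y\<in>Lw \<tau> j - {x}. data (ev \<tau> x) \<noteq> data (ev \<tau> y)))"

definition causality :: "(nat \<Rightarrow> nat \<Rightarrow> nat \<Rightarrow> 'i letter list set) \<Rightarrow> bool" where
  "causality S \<longleftrightarrow>
     (\<forall>n m v. n \<ge> 1 \<and> m \<ge> 1 \<and> v \<ge> 1 \<longrightarrow>
       (\<forall>\<tau>\<in>traces S n m v. \<forall>j. \<forall>x\<in>Lr \<tau> j.
          data (ev \<tau> x) = 0 \<or> (\<exists>y\<in>Lw \<tau> j. data (ev \<tau> x) = data (ev \<tau> y))))"

definition renaming :: "nat \<Rightarrow> nat \<Rightarrow> (nat \<Rightarrow> nat \<Rightarrow> nat) \<Rightarrow> bool" where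
  "renaming m v lam \<longleftrightarrow> (\<forall>j\<in>{1..m}. lam j 0 = 0 \<and> (\<forall>d. lam j d \<le> v))"

definition rename_ev :: "(nat \<Rightarrow> nat \<Rightarrow> nat) \<Rightarrow> event \<Rightarrow> event" where
  "rename_ev lam e = (op e, proc e, loc e, lam (loc e) (data e))"

definition data_independence :: "(nat \<Rightarrow> nat \<Rightarrow> nat \<Rightarrow> 'i letter list set) \<Rightarrow> bool" where
  "data_independence S \<longleftrightarrow>
     (\<forall>n m v. n \<ge> 1 \<and> m \<ge> 1 \<and> v \<ge> 1 \<longrightarrow>
       (\<forall>\<tau>. set \<tau> \<subseteq> E n m v \<longrightarrow>
          (\<tau> \<in> traces S n m v \<longleftrightarrow>
            (\<exists>\<tau>'\<in>traces_nm S n m. unambiguous \<tau>' \<and>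
               (\<exists>lam. renaming m v lam \<and> \<tau> = map (rename_ev lam) \<tau>')))))"

definition upto :: "event list \<Rightarrow> nat \<Rightarrow> nat set" where
  "upto \<tau> u = {k. 1 \<le> k \<and> k \<le> u \<and> op (ev \<tau> k) = W \<and> loc (ev \<tau> k) = loc (ev \<tau> u)}"

definition serial :: "event list \<Rightarrow> bool" where
  "serial \<tau> \<longleftrightarrow>
     (\<forall>u\<in>pos \<tau>. (upto \<tau> u = {} \<longrightarrow> data (ev \<tau> u) = 0) \<and>
                 (upto \<tau> u \<noteq> {} \<longrightarrow> data (ev \<tau> u) = data (ev \<tau> (Max (upto \<tau> u)))))"

definition Mrel :: "event list \<Rightarrow> nat \<Rightarrow> (nat \<times> nat) set" where
  "Mrel \<tau> i = {(u, v). u \<in> Pset \<tau> i \<and> v \<in> Pset \<tau> i \<and> u < v}"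

definition permute :: "event list \<Rightarrow> (nat \<Rightarrow> nat) \<Rightarrow> event list" where
  "permute \<tau> f = map (\<lambda>k. ev \<tau> (inv_into (pos \<tau>) f k)) [1..<length \<tau> + 1]"

definition seq_consistent :: "event list \<Rightarrow> bool" where
  "seq_consistent \<tau> \<longleftrightarrow>
     (\<exists>f. bij_betw f (pos \<tau>) (pos \<tau>) \<and>
          (\<forall>i u v. (u, v) \<in> Mrel \<tau> i \<longrightarrow> f u < f v) \<and>
          serial (permute \<tau> f))"

definition witness ::
  "(nat \<Rightarrow> nat \<Rightarrow> nat \<Rightarrow> 'i letter list set) \<Rightarrow> nat \<Rightarrow> nat \<Rightarrow> (event list \<Rightarrow> nat \<Rightarrow> (nat \<times> nat) set) \<Rightarrow> bool" where
  "witness S n m \<Omega> \<longleftrightarrow>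
     (\<forall>\<tau>\<in>traces_nm S n m. \<forall>j\<in>{1..m}.
        \<Omega> \<tau> j \<subseteq> Lw \<tau> j \<times> Lw \<tau> j \<and> strict_linear_order_on (Lw \<tau> j) (\<Omega> \<tau> j))"

definition Omega_e :: "(event list \<Rightarrow> nat \<Rightarrow> (nat \<times> nat) set) \<Rightarrow> event list \<Rightarrow> nat \<Rightarrow> (nat \<times> nat) set" where
  "Omega_e \<Omega> \<tau> j = {(x, y). x \<in> Lset \<tau> j \<and> y \<in> Lset \<tau> j \<and>
     ((data (ev \<tau> x) = data (ev \<tau> y) \<and> op (ev \<tau> x) = W \<and> op (ev \<tau> y) = R) \<or>
      (data (ev \<tau> x) = 0 \<and> data (ev \<tau> y) \<noteq> 0) \<or>
      (\<exists>a\<in>Lw \<tau> j. \<exists>b\<in>Lw \<tau> j. (a, b) \<in> \<Omega> \<tau> j \<and>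
          data (ev \<tau> a) = data (ev \<tau> x) \<and> data (ev \<tau> b) = data (ev \<tau> y)))}"

definition cgraph :: "nat \<Rightarrow> nat \<Rightarrow> (event list \<Rightarrow> nat \<Rightarrow> (nat \<times> nat) set) \<Rightarrow> event list \<Rightarrow> (nat \<times> nat) set" where
  "cgraph n m \<Omega> \<tau> = (\<Union>i\<in>{1..n}. Mrel \<tau> i) \<union> (\<Union>j\<in>{1..m}. Omega_e \<Omega> \<tau> j)"

end

(*
  (=>) Given serializations f of the traces, let Omega order the writes to each location
  as f does. For an unambiguous trace every edge of the constraint graph then points
  forward in f: a read follows the unique write of its value, a read of 0 precedes every
  write, and values written in Omega-order are read in that order. So the graph is acyclic.

  (<=) For an unambiguous trace, any topological numbering f of the acyclic constraint
  graph is a serialization: by causality a read of a nonzero value has a writer w, the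
  edge w -> read places w before it, and totality of Omega together with clause (3)
  of Omega_e forces every other write before the read to precede w; a read of 0 precedes
  every write by clause (2). An arbitrary trace is,
  by data independence, a renaming of an unambiguous one, and renaming values while
  fixing 0 preserves sequential consistency.
*)
theory Submission
  imports Defs
begin

section \<open>Topological numbering of acyclic relations\<close>

lemma acyclic_finite_sink:
  assumes "finite A" "A \<noteq> {}" "acyclic G"
  obtains a where "a \<in> A" "\<And>b. b \<in> A \<Longrightarrow> (a, b) \<notin> G"
proof -
  have "wf ((G \<inter> A \<times> A)\<inverse>)"
    using assms by (intro finite_acyclic_wf_converse) (auto intro: acyclic_subset)
  then obtain a where "a \<in> A" "\<And>b. (b, a) \<in> (G \<inter> A \<times> A)\<inverse> \<Longrightarrow> b \<notin> A"
    using \<open>A \<noteq> {}\<close> by (metis ex_in_conv wf_eq_minimal)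
  then show thesis using that by blast
qed

lemma acyclic_topological_numbering:
  assumes "finite A" "acyclic G"
  obtains f where "bij_betw f A {1..card A}" "\<And>u v. (u, v) \<in> G \<Longrightarrow> u \<in> A \<Longrightarrow> v \<in> A \<Longrightarrow> f u < f v"
  using assms(1)
proof (induction A arbitrary: thesis rule: finite_remove_induct)
  case empty
  then show ?case by (simp add: bij_betw_def)
next
  case (remove A)
  obtain a where a: "a \<in> A" and sink: "\<And>b. b \<in> A \<Longrightarrow> (a, b) \<notin> G"
    using acyclic_finite_sink[OF remove.hyps(1,2) assms(2)] by blast
  define B where "B = A - {a}"
  obtain g where g: "bij_betw g B {1..card B}"
    and g_mono: "\<And>u v. (u, v) \<in> G \<Longrightarrow> u \<in> B \<Longrightarrow> v \<in> B \<Longrightarrow> g u < g v"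
    using remove.IH[OF a] unfolding B_def by blast
  have card_A: "card A = Suc (card B)"
    using a remove.hyps(1) unfolding B_def by (simp add: card_Suc_Diff1 del: card_Diff_insert)
  define f where "f = g(a := card A)"
  have "bij_betw f B {1..card B}"
    using g by (rule bij_betw_cong[THEN iffD1, rotated]) (simp add: f_def B_def)
  moreover have "bij_betw f {a} {card A}"
    by (simp add: f_def)
  ultimately have "bij_betw f (B \<union> {a}) ({1..card B} \<union> {card A})"
    by (rule bij_betw_combine) (simp add: card_A)
  moreover have "B \<union> {a} = A" "{1..card B} \<union> {card A} = {1..card A}"
    using a card_A by (auto simp: B_def)
  ultimately have "bij_betw f A {1..card A}"
    by simp
  moreover have "f u < f v" if "(u, v) \<in> G" "u \<in> A" "v \<in> A" for u v
  proof -
    have "u \<in> B" using sink that unfolding B_def by blast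
    then have "g u \<le> card B" using g by (auto dest: bij_betwE)
    then show ?thesis
      using g_mono that \<open>u \<in> B\<close> card_A by (cases "v = a") (auto simp: f_def B_def)
  qed
  ultimately show ?case using remove.prems by blast
qed

lemma finite_pos [simp]: "finite (pos \<tau>)"
  by (simp add: pos_def)

lemma card_pos [simp]: "card (pos \<tau>) = length \<tau>"
  by (simp add: pos_def)

lemma ev_in_set: "k \<in> pos \<tau> \<Longrightarrow> ev \<tau> k \<in> set \<tau>"
  by (auto simp: pos_def ev_def)

lemma Lw_iff: "x \<in> Lw \<tau> j \<longleftrightarrow> x \<in> pos \<tau> \<and> loc (ev \<tau> x) = j \<and> op (ev \<tau> x) = W"
  by (auto simp: Lw_def Lset_def)

lemma unambiguous_data_nonzero: "unambiguous \<tau> \<Longrightarrow> x \<in> Lw \<tau> j \<Longrightarrow> data (ev \<tau> x) \<noteq> 0"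
  unfolding unambiguous_def by blast

lemma unambiguous_writer_unique:
  "unambiguous \<tau> \<Longrightarrow> x \<in> Lw \<tau> j \<Longrightarrow> y \<in> Lw \<tau> j \<Longrightarrow> data (ev \<tau> x) = data (ev \<tau> y) \<Longrightarrow> x = y"
  unfolding unambiguous_def by blast

definition writes_before :: "event list \<Rightarrow> (nat \<Rightarrow> nat) \<Rightarrow> nat \<Rightarrow> nat set" where
  "writes_before \<tau> f y = {x \<in> Lw \<tau> (loc (ev \<tau> y)). f x \<le> f y}"

definition serial_at :: "event list \<Rightarrow> (nat \<Rightarrow> nat) \<Rightarrow> nat \<Rightarrow> bool" where
  "serial_at \<tau> f y \<longleftrightarrow>
     (writes_before \<tau> f y = {} \<longrightarrow> data (ev \<tau> y) = 0) \<and>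
     (writes_before \<tau> f y \<noteq> {} \<longrightarrow>
        (\<exists>x\<in>writes_before \<tau> f y. (\<forall>z\<in>writes_before \<tau> f y. f z \<le> f x) \<and> data (ev \<tau> y) = data (ev \<tau> x)))"

lemma length_permute [simp]: "length (permute \<tau> f) = length \<tau>"
  by (simp add: permute_def del: upt_Suc)

lemma pos_permute [simp]: "pos (permute \<tau> f) = pos \<tau>"
  by (simp add: pos_def)

lemma ev_permute:
  assumes "bij_betw f (pos \<tau>) (pos \<tau>)" "k \<in> pos \<tau>"
  shows "ev (permute \<tau> f) k = ev \<tau> (inv_into (pos \<tau>) f k)"
proof -
  have "k - 1 < length \<tau>" "[1..<length \<tau> + 1] ! (k - 1) = k"
    using assms(2) by (auto simp: pos_def nth_upt simp del: upt_Suc)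
  then show ?thesis
    by (simp add: permute_def ev_def del: upt_Suc)
qed

lemma ev_permute_image:
  assumes "bij_betw f (pos \<tau>) (pos \<tau>)" "y \<in> pos \<tau>"
  shows "ev (permute \<tau> f) (f y) = ev \<tau> y"
  using assms by (simp add: ev_permute bij_betwE bij_betw_inv_into_left)

lemma upto_permute:
  assumes f: "bij_betw f (pos \<tau>) (pos \<tau>)" and y: "y \<in> pos \<tau>"
  shows "upto (permute \<tau> f) (f y) = f ` writes_before \<tau> f y"
proof -
  have "f y \<in> pos \<tau>"
    using f y by (blast dest: bij_betwE)
  then have "upto (permute \<tau> f) (f y) = {k \<in> pos \<tau>. op (ev (permute \<tau> f) k) = W \<and>
      loc (ev (permute \<tau> f) k) = loc (ev \<tau> y) \<and> k \<le> f y}"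
    using f y by (auto simp: upto_def pos_def ev_permute_image)
  also have "\<dots> = f ` {x \<in> pos \<tau>. op (ev (permute \<tau> f) (f x)) = W \<and>
      loc (ev (permute \<tau> f) (f x)) = loc (ev \<tau> y) \<and> f x \<le> f y}"
    using f bij_betw_imp_surj_on by fastforce
  also have "\<dots> = f ` writes_before \<tau> f y"
    unfolding writes_before_def Lw_iff using ev_permute_image[OF f] by auto
  finally show ?thesis .
qed

lemma serial_permute_iff:
  assumes f: "bij_betw f (pos \<tau>) (pos \<tau>)"
  shows "serial (permute \<tau> f) \<longleftrightarrow> (\<forall>y\<in>pos \<tau>. serial_at \<tau> f y)"
proof -
  have "serial_at \<tau> f y \<longleftrightarrow>
      (upto (permute \<tau> f) (f y) = {} \<longrightarrow> data (ev (permute \<tau> f) (f y)) = 0) \<and>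
      (upto (permute \<tau> f) (f y) \<noteq> {} \<longrightarrow>
         data (ev (permute \<tau> f) (f y)) = data (ev (permute \<tau> f) (Max (upto (permute \<tau> f) (f y)))))"
    if y: "y \<in> pos \<tau>" for y
  proof -
    define U where "U = writes_before \<tau> f y"
    have U_pos: "U \<subseteq> pos \<tau>" and "finite U"
      unfolding U_def writes_before_def Lw_iff by (auto intro: finite_subset)
    have Max_iff: "data (ev \<tau> y) = data (ev (permute \<tau> f) (Max (f ` U))) \<longleftrightarrow>
        (\<exists>x\<in>U. (\<forall>z\<in>U. f z \<le> f x) \<and> data (ev \<tau> y) = data (ev \<tau> x))" if "U \<noteq> {}"
    proof -
      have "Max (f ` U) \<in> f ` U"
        using \<open>finite U\<close> \<open>U \<noteq> {}\<close> by simp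
      then obtain x where x: "x \<in> U" "Max (f ` U) = f x"
        by auto
      have "\<forall>z\<in>U. f z \<le> f x"
        using x \<open>finite U\<close> by (metis Max_ge finite_imageI imageI)
      moreover have "x' \<in> U \<Longrightarrow> \<forall>z\<in>U. f z \<le> f x' \<Longrightarrow> f x' = f x" for x'
        using x calculation by (meson le_antisym)
      moreover have "f x' = f x \<Longrightarrow> x' \<in> U \<Longrightarrow> x' = x" for x'
        using f x U_pos by (meson bij_betw_def inj_onD subsetD)
      ultimately show ?thesis
        using x U_pos ev_permute_image[OF f] by (metis subsetD)
    qed
    show ?thesis
      using Max_iff
      by (simp add: upto_permute[OF f y] ev_permute_image[OF f y] serial_at_def U_def[symmetric])
  qed
  moreover have "serial (permute \<tau> f) \<longleftrightarrow> (\<forall>u\<in>f ` pos \<tau>.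
      (upto (permute \<tau> f) u = {} \<longrightarrow> data (ev (permute \<tau> f) u) = 0) \<and>
      (upto (permute \<tau> f) u \<noteq> {} \<longrightarrow>
         data (ev (permute \<tau> f) u) = data (ev (permute \<tau> f) (Max (upto (permute \<tau> f) u)))))"
    using f by (simp add: serial_def bij_betw_def)
  ultimately show ?thesis
    by simp
qed

section \<open>Serializations versus acyclic constraint graphs\<close>

lemma serial_at_nonzero_has_writer:
  assumes "serial_at \<tau> f y" "data (ev \<tau> y) \<noteq> 0"
  obtains w where "w \<in> Lw \<tau> (loc (ev \<tau> y))" "f w \<le> f y"
    "data (ev \<tau> w) = data (ev \<tau> y)" "\<And>z. z \<in> Lw \<tau> (loc (ev \<tau> y)) \<Longrightarrow> f z \<le> f y \<Longrightarrow> f z \<le> f w"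
proof -
  have "writes_before \<tau> f y \<noteq> {}"
    using assms unfolding serial_at_def by blast
  then obtain w where "w \<in> writes_before \<tau> f y" "\<forall>z\<in>writes_before \<tau> f y. f z \<le> f w"
    "data (ev \<tau> y) = data (ev \<tau> w)"
    using assms(1) unfolding serial_at_def by blast
  then show thesis
    using that unfolding writes_before_def by auto
qed

lemma serial_at_reads_from:
  assumes "unambiguous \<tau>" "serial_at \<tau> f y" "x \<in> Lw \<tau> (loc (ev \<tau> y))"
    and "data (ev \<tau> x) = data (ev \<tau> y)"
  shows "f x \<le> f y" "\<And>z. z \<in> Lw \<tau> (loc (ev \<tau> y)) \<Longrightarrow> f z \<le> f y \<Longrightarrow> f z \<le> f x"
proof -
  have "data (ev \<tau> y) \<noteq> 0"
    using assms(1,3,4) unambiguous_data_nonzero by metis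
  then obtain w where w: "w \<in> Lw \<tau> (loc (ev \<tau> y))" "f w \<le> f y" "data (ev \<tau> w) = data (ev \<tau> y)"
    "\<And>z. z \<in> Lw \<tau> (loc (ev \<tau> y)) \<Longrightarrow> f z \<le> f y \<Longrightarrow> f z \<le> f w"
    using serial_at_nonzero_has_writer[OF assms(2)] by blast
  have "w = x"
    using unambiguous_writer_unique[OF assms(1) w(1) assms(3)] w(3) assms(4) by simp
  then show "f x \<le> f y" "\<And>z. z \<in> Lw \<tau> (loc (ev \<tau> y)) \<Longrightarrow> f z \<le> f y \<Longrightarrow> f z \<le> f x"
    using w by auto
qed

lemma serial_at_zero_before_writes:
  assumes "unambiguous \<tau>" "serial_at \<tau> f y" "data (ev \<tau> y) = 0" "z \<in> Lw \<tau> (loc (ev \<tau> y))"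
  shows "f y < f z"
proof (rule ccontr)
  assume "\<not> f y < f z"
  then have "writes_before \<tau> f y \<noteq> {}"
    using assms(4) by (auto simp: writes_before_def)
  then obtain x where "x \<in> Lw \<tau> (loc (ev \<tau> y))" "data (ev \<tau> x) = 0"
    using assms(2,3) unfolding serial_at_def writes_before_def by auto
  then show False
    using assms(1) unambiguous_data_nonzero by blast
qed

definition write_order :: "event list \<Rightarrow> (nat \<Rightarrow> nat) \<Rightarrow> nat \<Rightarrow> (nat \<times> nat) set" where
  "write_order \<tau> f j = {(a, b). a \<in> Lw \<tau> j \<and> b \<in> Lw \<tau> j \<and> f a < f b}"

lemma strict_linear_order_on_write_order:
  assumes "inj_on f (pos \<tau>)"
  shows "strict_linear_order_on (Lw \<tau> j) (write_order \<tau> f j)"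
  unfolding strict_linear_order_on_def
proof (intro conjI)
  show "trans (write_order \<tau> f j)" "irrefl (write_order \<tau> f j)"
    by (auto simp: trans_def irrefl_def write_order_def)
  have "f x < f y \<or> f y < f x" if "x \<in> Lw \<tau> j" "y \<in> Lw \<tau> j" "x \<noteq> y" for x y
    using assms that by (auto simp: Lw_iff linorder_neq_iff[symmetric] dest: inj_onD)
  then show "total_on (Lw \<tau> j) (write_order \<tau> f j)"
    by (simp add: total_on_def write_order_def)
qed

lemma Omega_e_write_order_increasing:
  assumes un: "unambiguous \<tau>" and inj: "inj_on f (pos \<tau>)"
    and serial: "\<forall>y\<in>pos \<tau>. serial_at \<tau> f y"
    and \<Omega>: "\<Omega> \<tau> j = write_order \<tau> f j"
    and xy: "(x, y) \<in> Omega_e \<Omega> \<tau> j"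
  shows "f x < f y"
proof -
  have x: "x \<in> pos \<tau>" "loc (ev \<tau> x) = j" and y: "y \<in> pos \<tau>" "loc (ev \<tau> y) = j"
    using xy by (auto simp: Omega_e_def Lset_def)
  have sx: "serial_at \<tau> f x" and sy: "serial_at \<tau> f y"
    using serial x y by auto
  consider (reads_from) "data (ev \<tau> x) = data (ev \<tau> y)" "op (ev \<tau> x) = W" "op (ev \<tau> y) = R"
    | (initial) "data (ev \<tau> x) = 0" "data (ev \<tau> y) \<noteq> 0"
    | (ordered) a b where "a \<in> Lw \<tau> j" "b \<in> Lw \<tau> j" "f a < f b"
        "data (ev \<tau> a) = data (ev \<tau> x)" "data (ev \<tau> b) = data (ev \<tau> y)"
    using xy \<Omega> unfolding Omega_e_def write_order_def by auto
  then show ?thesis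
  proof cases
    case reads_from
    then have "f x \<le> f y" "x \<noteq> y"
      using serial_at_reads_from(1)[OF un sy] x y by (auto simp: Lw_iff)
    then show ?thesis
      using inj x y by (metis inj_onD le_neq_implies_less)
  next
    case initial
    then obtain w where "w \<in> Lw \<tau> j" "f w \<le> f y"
      using sy y(2) by (metis serial_at_nonzero_has_writer)
    moreover have "f x < f w"
      using serial_at_zero_before_writes[OF un sx initial(1)] x(2) calculation(1) by simp
    ultimately show ?thesis
      by simp
  next
    case ordered
    have "f x < f b"
      using serial_at_reads_from(2)[OF un sx _ ordered(4)] ordered(1-3) x(2) by fastforce
    moreover have "f b \<le> f y"
      using serial_at_reads_from(1)[OF un sy _ ordered(5)] ordered(2) y(2) by simp
    ultimately show ?thesis
      by simp
  qed
qed

lemma acyclic_cgraph_of_serialization: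
  assumes "unambiguous \<tau>" "inj_on f (pos \<tau>)"
    and "\<And>i u v. (u, v) \<in> Mrel \<tau> i \<Longrightarrow> f u < f v"
    and "\<forall>y\<in>pos \<tau>. serial_at \<tau> f y"
    and "\<And>j. \<Omega> \<tau> j = write_order \<tau> f j"
  shows "acyclic (cgraph n m \<Omega> \<tau>)"
proof -
  have "cgraph n m \<Omega> \<tau> \<subseteq> inv_image less_than f"
    using assms(3) Omega_e_write_order_increasing[where \<Omega> = \<Omega>, OF assms(1,2,4) assms(5)]
    by (auto simp: cgraph_def)
  then show ?thesis
    by (meson wf_acyclic wf_inv_image wf_less_than wf_subset)
qed

lemma witness_of_seq_consistent:
  assumes "\<forall>\<tau>\<in>traces_nm S n m. seq_consistent \<tau>"
  shows "\<exists>\<Omega>. witness S n m \<Omega> \<and>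
           (\<forall>\<tau>\<in>traces_nm S n m. unambiguous \<tau> \<longrightarrow> acyclic (cgraph n m \<Omega> \<tau>))"
proof -
  obtain F where F: "\<And>\<tau>. \<tau> \<in> traces_nm S n m \<Longrightarrow> bij_betw (F \<tau>) (pos \<tau>) (pos \<tau>) \<and>
      (\<forall>i u v. (u, v) \<in> Mrel \<tau> i \<longrightarrow> F \<tau> u < F \<tau> v) \<and> serial (permute \<tau> (F \<tau>))"
    using assms unfolding seq_consistent_def by (metis (no_types) bchoice)
  define \<Omega> where "\<Omega> \<tau> = write_order \<tau> (F \<tau>)" for \<tau>
  have "witness S n m \<Omega>"
    unfolding witness_def \<Omega>_def using F
    by (auto simp: bij_betw_def strict_linear_order_on_write_order) (auto simp: write_order_def)
  moreover have "acyclic (cgraph n m \<Omega> \<tau>)" if "\<tau> \<in> traces_nm S n m" "unambiguous \<tau>" for \<tau>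
    using F[OF that(1)] that(2) serial_permute_iff
    by (intro acyclic_cgraph_of_serialization[where f = "F \<tau>"]) (auto simp: bij_betw_def \<Omega>_def)
  ultimately show ?thesis
    by blast
qed

lemma serial_at_write:
  assumes "y \<in> pos \<tau>" "op (ev \<tau> y) = W"
  shows "serial_at \<tau> f y"
proof -
  have "y \<in> writes_before \<tau> f y" "\<forall>z\<in>writes_before \<tau> f y. f z \<le> f y"
    using assms by (auto simp: writes_before_def Lw_iff)
  then show ?thesis
    unfolding serial_at_def by blast
qed

lemma serial_at_read_of_constraints:
  assumes un: "unambiguous \<tau>" and total: "total_on (Lw \<tau> j) (\<Omega> \<tau> j)"
    and mono: "\<And>x z. (x, z) \<in> Omega_e \<Omega> \<tau> j \<Longrightarrow> f x < f z"
    and y: "y \<in> Lset \<tau> j" "op (ev \<tau> y) = R"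
    and causal: "data (ev \<tau> y) = 0 \<or> (\<exists>w\<in>Lw \<tau> j. data (ev \<tau> y) = data (ev \<tau> w))"
  shows "serial_at \<tau> f y"
proof -
  have before: "writes_before \<tau> f y = {z \<in> Lw \<tau> j. f z \<le> f y}"
    using y by (simp add: writes_before_def Lset_def)
  have Lw_Lset: "z \<in> Lw \<tau> j \<Longrightarrow> z \<in> Lset \<tau> j" for z
    by (simp add: Lw_def)
  show ?thesis
  proof (cases "data (ev \<tau> y) = 0")
    case True
    have "(y, z) \<in> Omega_e \<Omega> \<tau> j" if "z \<in> Lw \<tau> j" for z
      using True y(1) that unambiguous_data_nonzero[OF un] by (auto simp: Omega_e_def Lw_Lset)
    then have "writes_before \<tau> f y = {}"
      using mono by (force simp: before)
    then show ?thesis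
      using True by (simp add: serial_at_def)
  next
    case False
    then obtain w where w: "w \<in> Lw \<tau> j" "data (ev \<tau> y) = data (ev \<tau> w)"
      using causal by auto
    have "(w, y) \<in> Omega_e \<Omega> \<tau> j"
      using w y by (auto simp: Omega_e_def Lw_def)
    then have "w \<in> writes_before \<tau> f y"
      using mono w(1) by (force simp: before)
    moreover have "f z \<le> f w" if z: "z \<in> writes_before \<tau> f y" for z
    proof (cases "z = w")
      case False
      have "z \<in> Lw \<tau> j" "f z \<le> f y"
        using z by (auto simp: before)
      then consider "(z, w) \<in> \<Omega> \<tau> j" | "(w, z) \<in> \<Omega> \<tau> j"
        using total w(1) False by (auto simp: total_on_def)
      then show ?thesis
      proof cases
        case 1
        then have "(z, w) \<in> Omega_e \<Omega> \<tau> j"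
          using \<open>z \<in> Lw \<tau> j\<close> w(1) by (auto simp: Omega_e_def Lw_Lset)
        then show ?thesis
          using mono by fastforce
      next
        case 2
        \<comment> \<open>y reads the value of w, and w is \<open>\<Omega>\<close>-before z: clause (3) of \<open>Omega_e\<close>\<close>
        then have "(y, z) \<in> Omega_e \<Omega> \<tau> j"
          using \<open>z \<in> Lw \<tau> j\<close> w y(1) by (auto simp: Omega_e_def Lw_Lset)
        then show ?thesis
          using mono \<open>f z \<le> f y\<close> by fastforce
      qed
    qed simp
    ultimately show ?thesis
      using w(2) by (auto simp: serial_at_def)
  qed
qed

lemma seq_consistent_of_acyclic_cgraph:
  assumes un: "unambiguous \<tau>" and acyclic: "acyclic (cgraph n m \<Omega> \<tau>)"
    and total: "\<And>j. j \<in> {1..m} \<Longrightarrow> total_on (Lw \<tau> j) (\<Omega> \<tau> j)"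
    and range: "\<And>e. e \<in> set \<tau> \<Longrightarrow> proc e \<in> {1..n} \<and> loc e \<in> {1..m}"
    and causal: "\<And>j x. x \<in> Lr \<tau> j \<Longrightarrow> data (ev \<tau> x) = 0 \<or> (\<exists>w\<in>Lw \<tau> j. data (ev \<tau> x) = data (ev \<tau> w))"
  shows "seq_consistent \<tau>"
proof -
  obtain f where f: "bij_betw f (pos \<tau>) (pos \<tau>)"
    and mono: "\<And>u v. (u, v) \<in> cgraph n m \<Omega> \<tau> \<Longrightarrow> u \<in> pos \<tau> \<Longrightarrow> v \<in> pos \<tau> \<Longrightarrow> f u < f v"
    using acyclic_topological_numbering[OF finite_pos acyclic] by (metis card_pos pos_def)
  have "f u < f v" if "(u, v) \<in> Mrel \<tau> i" for i u v
  proof -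
    have "u \<in> pos \<tau>" "v \<in> pos \<tau>" "i = proc (ev \<tau> u)"
      using that by (auto simp: Mrel_def Pset_def)
    moreover have "i \<in> {1..n}"
      using range[OF ev_in_set] calculation by blast
    ultimately show ?thesis
      using that mono unfolding cgraph_def by blast
  qed
  moreover have "serial_at \<tau> f y" if y: "y \<in> pos \<tau>" for y
  proof (cases "op (ev \<tau> y)")
    case W
    with y show ?thesis
      by (rule serial_at_write)
  next
    case R
    define j where "j = loc (ev \<tau> y)"
    have "j \<in> {1..m}" "y \<in> Lset \<tau> j"
      using y range[OF ev_in_set] by (auto simp: j_def Lset_def simp del: atLeastAtMost_iff)
    moreover have "f x < f z" if "(x, z) \<in> Omega_e \<Omega> \<tau> j" for x z
      using that mono \<open>j \<in> {1..m}\<close> by (auto simp: cgraph_def Omega_e_def Lset_def)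
    moreover have "y \<in> Lr \<tau> j"
      using \<open>y \<in> Lset \<tau> j\<close> R by (simp add: Lr_def)
    ultimately show ?thesis
      using un total causal R by (blast intro: serial_at_read_of_constraints)
  qed
  ultimately show ?thesis
    using f serial_permute_iff unfolding seq_consistent_def by blast
qed

section \<open>Renaming data values\<close>

lemma pos_map [simp]: "pos (map g \<tau>) = pos \<tau>"
  by (simp add: pos_def)

lemma ev_map: "k \<in> pos \<tau> \<Longrightarrow> ev (map g \<tau>) k = g (ev \<tau> k)"
  by (auto simp: ev_def pos_def)

lemma rename_ev_simps [simp]:
  "op (rename_ev lam e) = op e" "proc (rename_ev lam e) = proc e"
  "loc (rename_ev lam e) = loc e" "data (rename_ev lam e) = lam (loc e) (data e)"
  by (simp_all add: rename_ev_def op_def proc_def loc_def data_def)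

lemma inv_into_pos_in_pos:
  "bij_betw f (pos \<tau>) (pos \<tau>) \<Longrightarrow> k \<in> pos \<tau> \<Longrightarrow> inv_into (pos \<tau>) f k \<in> pos \<tau>"
  by (metis bij_betw_imp_surj_on inv_into_into)

lemma permute_map:
  assumes "bij_betw f (pos \<tau>) (pos \<tau>)"
  shows "permute (map g \<tau>) f = map g (permute \<tau> f)"
proof (rule nth_equalityI)
  fix k assume k: "k < length (permute (map g \<tau>) f)"
  then have "Suc k \<in> pos \<tau>"
    by (simp add: pos_def)
  then have "ev (permute (map g \<tau>) f) (Suc k) = g (ev (permute \<tau> f) (Suc k))"
    using assms by (simp add: ev_permute ev_map inv_into_pos_in_pos)
  then show "permute (map g \<tau>) f ! k = map g (permute \<tau> f) ! k"
    using k by (simp add: ev_def)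
qed simp

lemma set_permute_subset:
  assumes "bij_betw f (pos \<tau>) (pos \<tau>)"
  shows "set (permute \<tau> f) \<subseteq> set \<tau>"
proof
  fix e assume "e \<in> set (permute \<tau> f)"
  then obtain k where "k < length \<tau>" "e = permute \<tau> f ! k"
    by (auto simp: in_set_conv_nth)
  then have "Suc k \<in> pos \<tau>" "e = ev (permute \<tau> f) (Suc k)"
    by (simp_all add: pos_def ev_def)
  then show "e \<in> set \<tau>"
    using assms by (simp add: ev_permute ev_in_set inv_into_pos_in_pos)
qed

lemma Mrel_map_rename_ev [simp]: "Mrel (map (rename_ev lam) \<tau>) i = Mrel \<tau> i"
  by (auto simp: Mrel_def Pset_def ev_map)

lemma upto_map_rename_ev:
  "u \<in> pos \<sigma> \<Longrightarrow> upto (map (rename_ev lam) \<sigma>) u = upto \<sigma> u"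
  by (auto simp: upto_def pos_def ev_map)

lemma serial_map_rename_ev:
  assumes "serial \<sigma>" and zero: "\<And>e. e \<in> set \<sigma> \<Longrightarrow> lam (loc e) 0 = 0"
  shows "serial (map (rename_ev lam) \<sigma>)"
  unfolding serial_def pos_map
proof
  fix u assume u: "u \<in> pos \<sigma>"
  have "Max (upto \<sigma> u) \<in> pos \<sigma> \<and> loc (ev \<sigma> (Max (upto \<sigma> u))) = loc (ev \<sigma> u)"
    if "upto \<sigma> u \<noteq> {}"
  proof -
    have "finite (upto \<sigma> u)"
      by (rule finite_subset[of _ "{..u}"]) (auto simp: upto_def)
    then have "Max (upto \<sigma> u) \<in> upto \<sigma> u"
      using that by simp
    then show ?thesis
      using u by (auto simp: upto_def pos_def)
  qed
  then show "(upto (map (rename_ev lam) \<sigma>) u = {} \<longrightarrow> data (ev (map (rename_ev lam) \<sigma>) u) = 0) \<and>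
      (upto (map (rename_ev lam) \<sigma>) u \<noteq> {} \<longrightarrow> data (ev (map (rename_ev lam) \<sigma>) u) =
         data (ev (map (rename_ev lam) \<sigma>) (Max (upto (map (rename_ev lam) \<sigma>) u))))"
    using assms(1) u zero[OF ev_in_set[OF u]]
    by (auto simp: serial_def upto_map_rename_ev ev_map)
qed

lemma seq_consistent_map_rename_ev:
  assumes "seq_consistent \<tau>" and "\<And>e. e \<in> set \<tau> \<Longrightarrow> lam (loc e) 0 = 0"
  shows "seq_consistent (map (rename_ev lam) \<tau>)"
proof -
  obtain f where f: "bij_betw f (pos \<tau>) (pos \<tau>)"
    and "\<forall>i u v. (u, v) \<in> Mrel \<tau> i \<longrightarrow> f u < f v" "serial (permute \<tau> f)"
    using assms(1) unfolding seq_consistent_def by blast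
  moreover have "serial (permute (map (rename_ev lam) \<tau>) f)"
    using calculation assms(2) set_permute_subset[OF f]
    by (auto simp: permute_map intro!: serial_map_rename_ev)
  ultimately show ?thesis
    unfolding seq_consistent_def by auto
qed

lemma set_trace_subset_E:
  assumes "memory_system Ea S" "n \<ge> 1" "m \<ge> 1" "v \<ge> 1" "\<tau> \<in> traces S n m v"
  shows "set \<tau> \<subseteq> E n m v"
proof
  fix e assume e: "e \<in> set \<tau>"
  obtain r where r: "r \<in> S n m v" "\<tau> = trace_of r"
    using assms(5) unfolding traces_def by blast
  have Ea: "\<And>e. Mem e \<in> Ea n m v \<longleftrightarrow> e \<in> E n m v" "regular_on (Ea n m v) (S n m v)"
    using assms(1-4) unfolding memory_system_def by blast+
  have "Mem e \<in> set r"
    using e r(2) unfolding trace_of_def by (auto elim!: is_mem.elims)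
  moreover have "set r \<subseteq> Ea n m v"
    using r(1) Ea(2) unfolding regular_on_def by blast
  ultimately show "e \<in> E n m v"
    using Ea(1) by blast
qed

lemma seq_consistent_unambiguous_of_witness:
  assumes "memory_system Ea S" "causality S" "n \<ge> 1" "m \<ge> 1"
    and "witness S n m \<Omega>" "acyclic (cgraph n m \<Omega> \<tau>)"
    and "\<tau> \<in> traces_nm S n m" "unambiguous \<tau>"
  shows "seq_consistent \<tau>"
proof -
  obtain v where v: "v \<ge> 1" "\<tau> \<in> traces S n m v"
    using assms(7) unfolding traces_nm_def by blast
  show ?thesis
  proof (rule seq_consistent_of_acyclic_cgraph[OF assms(8,6)])
    show "total_on (Lw \<tau> j) (\<Omega> \<tau> j)" if "j \<in> {1..m}" for j
      using assms(5,7) that by (auto simp: witness_def strict_linear_order_on_def)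
    show "proc e \<in> {1..n} \<and> loc e \<in> {1..m}" if "e \<in> set \<tau>" for e
      using set_trace_subset_E[OF assms(1,3,4) v] that by (auto simp: E_def)
    show "data (ev \<tau> x) = 0 \<or> (\<exists>w\<in>Lw \<tau> j. data (ev \<tau> x) = data (ev \<tau> w))"
      if "x \<in> Lr \<tau> j" for j x
      using assms(2-4) v that unfolding causality_def by blast
  qed
qed

lemma seq_consistent_of_unambiguous:
  assumes "memory_system Ea S" "data_independence S" "n \<ge> 1" "m \<ge> 1"
    and unamb: "\<And>\<tau>'. \<tau>' \<in> traces_nm S n m \<Longrightarrow> unambiguous \<tau>' \<Longrightarrow> seq_consistent \<tau>'"
    and "\<tau> \<in> traces_nm S n m"
  shows "seq_consistent \<tau>"
proof -
  obtain v where v: "v \<ge> 1" "\<tau> \<in> traces S n m v"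
    using assms(6) unfolding traces_nm_def by blast
  have "set \<tau> \<subseteq> E n m v"
    using set_trace_subset_E[OF assms(1,3,4) v] .
  then obtain \<tau>' lam where \<tau>': "\<tau>' \<in> traces_nm S n m" "unambiguous \<tau>'"
    and lam: "renaming m v lam" and \<tau>: "\<tau> = map (rename_ev lam) \<tau>'"
    using assms(2-4) v unfolding data_independence_def by blast
  obtain v' where "v' \<ge> 1" "\<tau>' \<in> traces S n m v'"
    using \<tau>'(1) unfolding traces_nm_def by blast
  then have "loc e \<in> {1..m}" if "e \<in> set \<tau>'" for e
    using set_trace_subset_E[OF assms(1,3,4)] that by (force simp: E_def)
  then show ?thesis
    using seq_consistent_map_rename_ev[OF unamb[OF \<tau>']] lam
    unfolding \<tau> renaming_def by blast
qed

theorem corollary5p4: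
  fixes Ea :: "nat \<Rightarrow> nat \<Rightarrow> nat \<Rightarrow> 'i letter set"
    and S :: "nat \<Rightarrow> nat \<Rightarrow> nat \<Rightarrow> 'i letter list set"
  assumes "memory_system Ea S"
    and "causality S"
    and "data_independence S"
    and "n \<ge> 1" and "m \<ge> 1"
  shows "(\<forall>\<tau>\<in>traces_nm S n m. seq_consistent \<tau>) \<longleftrightarrow>
         (\<exists>\<Omega>. witness S n m \<Omega> \<and>
               (\<forall>\<tau>\<in>traces_nm S n m. unambiguous \<tau> \<longrightarrow> acyclic (cgraph n m \<Omega> \<tau>)))"
proof
  assume "\<forall>\<tau>\<in>traces_nm S n m. seq_consistent \<tau>"
  then show "\<exists>\<Omega>. witness S n m \<Omega> \<and>
      (\<forall>\<tau>\<in>traces_nm S n m. unambiguous \<tau> \<longrightarrow> acyclic (cgraph n m \<Omega> \<tau>))"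
    by (rule witness_of_seq_consistent)
next
  assume "\<exists>\<Omega>. witness S n m \<Omega> \<and>
      (\<forall>\<tau>\<in>traces_nm S n m. unambiguous \<tau> \<longrightarrow> acyclic (cgraph n m \<Omega> \<tau>))"
  then obtain \<Omega> where "witness S n m \<Omega>"
    and "\<And>\<tau>. \<tau> \<in> traces_nm S n m \<Longrightarrow> unambiguous \<tau> \<Longrightarrow> acyclic (cgraph n m \<Omega> \<tau>)"
    by blast
  then have "seq_consistent \<tau>" if "\<tau> \<in> traces_nm S n m" "unambiguous \<tau>" for \<tau>
    using seq_consistent_unambiguous_of_witness[OF assms(1,2,4,5)] that by blast
  then show "\<forall>\<tau>\<in>traces_nm S n m. seq_consistent \<tau>"
    using seq_consistent_of_unambiguous[OF assms(1,3,4,5)] by blast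
qed

end
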